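(* Let $(X,d)$ be a compact metric space and $f_{0,\infty}=\{f_n\}_{n=0}^\infty$ an equi-continuous sequence of continuous self-maps of $X$. Then \[h^{*}(f_{0,\infty}^{n})=h^{*}(f_{0,\infty}),\quad n\geq1.\]
   Context: $f_{0,\infty}$ is equi-continuous if for every $\epsilon>0$ there is $\delta>0$ with $d(x,y)<\delta\Rightarrow d(f_n x,f_n y)<\epsilon$ for all $n$. $f_i^n=f_{i+n-1}\circ\cdots\circ f_i$, $f_i^0=\mathrm{id}$. The $n$-th compositions system is $f_{0,\infty}^n=\{f_{kn}^n\}_{k=0}^\infty$, i.e. the maps $f_{kn+n-1}\circ\cdots\circ f_{kn}$, $k\ge0$. $\mathcal S$ is the set of strictly increasing sequences $A=\{a_i\}_{i\ge1}$ of nonnegative integers. For a sequence $g_{0,\infty}$ of continuous self-maps, $h_A(g_{0,\infty})=\sup_{\mathscr A}\limsup_{m\to\infty}\frac1m\log\mathcal N(\bigvee_{i=1}^m (g_0^{a_i})^{-1}\mathscr A)$ over finite open covers $\mathscr A$ ($\bigvee$ = common refinement, $\mathcal N$ = minimal cardinality of a subcover), and $h^*(g_{0,\infty})=\sup_{A\in\mathcal S}h_A(g_{0,\infty})$. *)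

theory Defs
  imports "HOL-Analysis.Analysis"
begin

fun fcomp :: "(nat \<Rightarrow> 'a \<Rightarrow> 'a) \<Rightarrow> nat \<Rightarrow> nat \<Rightarrow> 'a \<Rightarrow> 'a" where
  "fcomp f i 0 = id"
| "fcomp f i (Suc n) = f (i + n) \<circ> fcomp f i n"

definition nth_system :: "(nat \<Rightarrow> 'a \<Rightarrow> 'a) \<Rightarrow> nat \<Rightarrow> nat \<Rightarrow> 'a \<Rightarrow> 'a" where
  "nth_system f n = (\<lambda>k. fcomp f (k * n) n)"

definition equicontinuous_seq :: "'a::metric_space set \<Rightarrow> (nat \<Rightarrow> 'a \<Rightarrow> 'a) \<Rightarrow> bool" where
  "equicontinuous_seq X f \<longleftrightarrow>
     (\<forall>e>0. \<exists>d>0. \<forall>n. \<forall>x\<in>X. \<forall>y\<in>X. dist x y < d \<longrightarrow> dist (f n x) (f n y) < e)"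

definition open_cover :: "'a::topological_space set \<Rightarrow> 'a set set \<Rightarrow> bool" where
  "open_cover X \<A> \<longleftrightarrow> finite \<A> \<and> (\<forall>U\<in>\<A>. openin (top_of_set X) U) \<and> \<Union>\<A> = X"

definition cover_num :: "'a set \<Rightarrow> 'a set set \<Rightarrow> nat" where
  "cover_num X \<A> = (LEAST k. \<exists>\<C>. \<C> \<subseteq> \<A> \<and> finite \<C> \<and> card \<C> = k \<and> X \<subseteq> \<Union>\<C>)"

definition join_pre :: "'a set \<Rightarrow> (nat \<Rightarrow> 'a \<Rightarrow> 'a) \<Rightarrow> (nat \<Rightarrow> nat) \<Rightarrow> nat \<Rightarrow> 'a set set \<Rightarrow> 'a set set" where
  "join_pre X g a m \<A> =
     {X \<inter> (\<Inter>i\<in>{..<m}. {x. fcomp g 0 (a i) x \<in> c i}) | c. \<forall>i<m. c i \<in> \<A>}"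

text \<open>h_A(g) for a strictly increasing sequence a (indexed from 0 here).\<close>
definition seq_entropy_along :: "'a::topological_space set \<Rightarrow> (nat \<Rightarrow> 'a \<Rightarrow> 'a) \<Rightarrow> (nat \<Rightarrow> nat) \<Rightarrow> ereal" where
  "seq_entropy_along X g a =
     (SUP \<A> \<in> {\<A>. open_cover X \<A>}.
        limsup (\<lambda>m. ereal (ln (real (cover_num X (join_pre X g a m \<A>))) / real m)))"

definition seq_entropy :: "'a::topological_space set \<Rightarrow> (nat \<Rightarrow> 'a \<Rightarrow> 'a) \<Rightarrow> ereal" where
  "seq_entropy X g = (SUP a \<in> {a. strict_mono a}. seq_entropy_along X g a)"

end

theory Submission
  imports Defs
begin

text \<open>
  A strictly increasing sequence a for the n-th compositions system is the sequence n a for the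
  original system, which gives h^*(f^n) <= h^*(f). Conversely, write a_i = n q_i + r_i with
  0 <= r_i < n, so that f_0^(a_i) = f_(n q_i)^(r_i) o (f^n)_0^(q_i). The maps f_j^r with r < n form a
  uniformly equicontinuous family, so on the compact space every open cover A is refined by a finite
  cover B by small balls, each of which every f_j^r maps into a member of A. Hence the join of the
  first m pullbacks of A along a is refined by the join of the first m pullbacks of B along the
  increasing enumeration Q of the values of q: as Q_i >= q_i, each q_i with i < m is some Q_j with j <= i.
\<close>

lemma fcomp_add: "fcomp f i (a + b) = fcomp f (i + a) b \<circ> fcomp f i a"
  by (induction b) (simp_all add: add.assoc)

lemma fcomp_nth_system: "fcomp (nth_system f n) 0 k = fcomp f 0 (k * n)"
proof (induction k)
  case (Suc k)
  have "fcomp f 0 (Suc k * n) = fcomp f (k * n) n \<circ> fcomp f 0 (k * n)"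
    using fcomp_add[of f 0 "k * n" n] by (simp add: add.commute)
  with Suc show ?case by (simp add: nth_system_def)
qed simp

lemma fcomp_image_subset:
  assumes "\<And>k. f k ` X \<subseteq> X"
  shows "fcomp f j r ` X \<subseteq> X"
  using assms by (induction r) auto

lemma nth_system_image_subset:
  assumes "\<And>k. f k ` X \<subseteq> X"
  shows "nth_system f n k ` X \<subseteq> X"
  unfolding nth_system_def by (rule fcomp_image_subset[of f X, OF assms])

definition equicontinuous_family :: "'a::metric_space set \<Rightarrow> ('a \<Rightarrow> 'b::metric_space) set \<Rightarrow> bool" where
  "equicontinuous_family X \<Phi> \<longleftrightarrow>
     (\<forall>e>0. \<exists>d>0. \<forall>\<phi>\<in>\<Phi>. \<forall>x\<in>X. \<forall>y\<in>X. dist x y < d \<longrightarrow> dist (\<phi> x) (\<phi> y) < e)"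

lemma equicontinuous_seq_iff_family: "equicontinuous_seq X f \<longleftrightarrow> equicontinuous_family X (range f)"
  unfolding equicontinuous_seq_def equicontinuous_family_def by simp

lemma equicontinuous_family_subset:
  assumes "equicontinuous_family X \<Phi>" "\<Psi> \<subseteq> \<Phi>"
  shows "equicontinuous_family X \<Psi>"
  using assms unfolding equicontinuous_family_def by (meson subsetD)

lemma equicontinuous_family_comp:
  assumes \<Phi>: "equicontinuous_family Y \<Phi>" and \<Psi>: "equicontinuous_family X \<Psi>"
    and into: "\<And>\<psi>. \<psi> \<in> \<Psi> \<Longrightarrow> \<psi> ` X \<subseteq> Y"
  shows "equicontinuous_family X {\<phi> \<circ> \<psi> | \<phi> \<psi>. \<phi> \<in> \<Phi> \<and> \<psi> \<in> \<Psi>}"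
  unfolding equicontinuous_family_def
proof (intro allI impI)
  fix e :: real assume "e > 0"
  then obtain d where d: "d > 0" "\<forall>\<phi>\<in>\<Phi>. \<forall>x\<in>Y. \<forall>y\<in>Y. dist x y < d \<longrightarrow> dist (\<phi> x) (\<phi> y) < e"
    using \<Phi> unfolding equicontinuous_family_def by blast
  then obtain d' where d': "d' > 0" "\<forall>\<psi>\<in>\<Psi>. \<forall>x\<in>X. \<forall>y\<in>X. dist x y < d' \<longrightarrow> dist (\<psi> x) (\<psi> y) < d"
    using \<Psi> unfolding equicontinuous_family_def by blast
  have "dist (\<phi> (\<psi> x)) (\<phi> (\<psi> y)) < e"
    if "\<phi> \<in> \<Phi>" "\<psi> \<in> \<Psi>" "x \<in> X" "y \<in> X" "dist x y < d'" for \<phi> \<psi> x y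
    using d d' into that by (meson image_subset_iff)
  with d' show "\<exists>d>0. \<forall>h\<in>{\<phi> \<circ> \<psi> | \<phi> \<psi>. \<phi> \<in> \<Phi> \<and> \<psi> \<in> \<Psi>}. \<forall>x\<in>X. \<forall>y\<in>X.
      dist x y < d \<longrightarrow> dist (h x) (h y) < e"
    by (intro exI[of _ d']) auto
qed

lemma equicontinuous_family_Un:
  assumes \<Phi>: "equicontinuous_family X \<Phi>" and \<Psi>: "equicontinuous_family X \<Psi>"
  shows "equicontinuous_family X (\<Phi> \<union> \<Psi>)"
  unfolding equicontinuous_family_def
proof (intro allI impI)
  fix e :: real assume "e > 0"
  obtain d where d: "d > 0" "\<forall>\<phi>\<in>\<Phi>. \<forall>x\<in>X. \<forall>y\<in>X. dist x y < d \<longrightarrow> dist (\<phi> x) (\<phi> y) < e"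
    using \<Phi> \<open>e > 0\<close> unfolding equicontinuous_family_def by blast
  obtain d' where d': "d' > 0" "\<forall>\<psi>\<in>\<Psi>. \<forall>x\<in>X. \<forall>y\<in>X. dist x y < d' \<longrightarrow> dist (\<psi> x) (\<psi> y) < e"
    using \<Psi> \<open>e > 0\<close> unfolding equicontinuous_family_def by blast
  have "dist (h x) (h y) < e" if "h \<in> \<Phi> \<union> \<Psi>" "x \<in> X" "y \<in> X" "dist x y < min d d'" for h x y
    using that d(2) d'(2) by (metis Un_iff min_less_iff_conj)
  with d(1) d'(1) show "\<exists>d>0. \<forall>h\<in>\<Phi> \<union> \<Psi>. \<forall>x\<in>X. \<forall>y\<in>X. dist x y < d \<longrightarrow> dist (h x) (h y) < e"
    by (intro exI[of _ "min d d'"]) auto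
qed

lemma equicontinuous_family_UN:
  assumes "finite I" "\<And>i. i \<in> I \<Longrightarrow> equicontinuous_family X (\<Phi> i)"
  shows "equicontinuous_family X (\<Union>i\<in>I. \<Phi> i)"
  using assms
proof (induction I rule: finite_induct)
  case empty
  show ?case unfolding equicontinuous_family_def by (auto intro: exI[of _ 1])
next
  case (insert i I)
  then show ?case by (simp add: equicontinuous_family_Un)
qed

lemma equicontinuous_family_fcomp:
  assumes into: "\<And>k. f k ` X \<subseteq> X" and equi: "equicontinuous_seq X f"
  shows "equicontinuous_family X (range (\<lambda>j. fcomp f j r))"
proof (induction r)
  case 0
  show ?case unfolding equicontinuous_family_def by auto
next
  case (Suc r)
  have "range (\<lambda>j. fcomp f j (Suc r))
      \<subseteq> {\<phi> \<circ> \<psi> | \<phi> \<psi>. \<phi> \<in> range f \<and> \<psi> \<in> range (\<lambda>j. fcomp f j r)}"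
    by auto
  moreover have "equicontinuous_family X {\<phi> \<circ> \<psi> | \<phi> \<psi>. \<phi> \<in> range f \<and> \<psi> \<in> range (\<lambda>j. fcomp f j r)}"
    using equi Suc fcomp_image_subset[of f X, OF into]
    by (intro equicontinuous_family_comp) (auto simp: equicontinuous_seq_iff_family)
  ultimately show ?case by (rule equicontinuous_family_subset[rotated])
qed

lemma equicontinuous_family_fcomp_bounded:
  assumes "\<And>k. f k ` X \<subseteq> X" and "equicontinuous_seq X f"
  shows "equicontinuous_family X {fcomp f j r | j r. r < n}"
proof -
  have "{fcomp f j r | j r. r < n} = (\<Union>r<n. range (\<lambda>j. fcomp f j r))" by auto
  then show ?thesis
    using equicontinuous_family_fcomp[OF assms] by (simp add: equicontinuous_family_UN)
qed

lemma open_cover_Lebesgue_number: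
  assumes "compact X" and A: "open_cover X A"
  obtains \<epsilon> where "\<epsilon> > 0" "\<And>x. x \<in> X \<Longrightarrow> \<exists>U\<in>A. ball x \<epsilon> \<inter> X \<subseteq> U"
proof -
  have "\<forall>U\<in>A. \<exists>T. open T \<and> U = X \<inter> T"
    using A unfolding open_cover_def openin_open by blast
  then obtain T where T: "\<forall>U\<in>A. open (T U) \<and> U = X \<inter> T U"
    by (rule bchoice[THEN exE])
  have cov: "X \<subseteq> \<Union>(T ` A)" using A T unfolding open_cover_def by blast
  have opn: "\<And>G. G \<in> T ` A \<Longrightarrow> open G" using T by blast
  obtain \<epsilon> where \<epsilon>: "\<epsilon> > 0" "\<And>x. x \<in> X \<Longrightarrow> \<exists>G\<in>T ` A. ball x \<epsilon> \<subseteq> G"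
    using Heine_Borel_lemma[OF \<open>compact X\<close> cov opn] by blast
  have "\<exists>U\<in>A. ball x \<epsilon> \<inter> X \<subseteq> U" if x: "x \<in> X" for x
  proof -
    obtain U where "U \<in> A" "ball x \<epsilon> \<subseteq> T U" using \<epsilon>(2)[OF x] by blast
    with T show ?thesis by blast
  qed
  with \<epsilon>(1) show ?thesis by (rule that)
qed

lemma open_cover_refinement_equicontinuous:
  assumes "compact X" and A: "open_cover X A" and equi: "equicontinuous_family X \<Phi>"
    and into: "\<And>\<phi>. \<phi> \<in> \<Phi> \<Longrightarrow> \<phi> ` X \<subseteq> X"
  obtains B where "open_cover X B" "\<And>b \<phi>. b \<in> B \<Longrightarrow> \<phi> \<in> \<Phi> \<Longrightarrow> \<exists>U\<in>A. \<phi> ` b \<subseteq> U"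
proof -
  obtain \<epsilon> where \<epsilon>: "\<epsilon> > 0" "\<And>x. x \<in> X \<Longrightarrow> \<exists>U\<in>A. ball x \<epsilon> \<inter> X \<subseteq> U"
    using open_cover_Lebesgue_number[OF assms(1,2)] by blast
  obtain \<delta> where \<delta>: "\<delta> > 0" "\<forall>\<phi>\<in>\<Phi>. \<forall>x\<in>X. \<forall>y\<in>X. dist x y < \<delta> \<longrightarrow> dist (\<phi> x) (\<phi> y) < \<epsilon>"
    using equi \<epsilon>(1) unfolding equicontinuous_family_def by blast
  obtain S where S: "finite S" "S \<subseteq> X" "X \<subseteq> (\<Union>x\<in>S. ball x \<delta>)"
    using seq_compact_imp_totally_bounded[OF compact_imp_seq_compact[OF \<open>compact X\<close>], rule_format, OF \<delta>(1)]
    by metis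
  define B where "B = (\<lambda>x. ball x \<delta> \<inter> X) ` S"
  have "openin (top_of_set X) (ball x \<delta> \<inter> X)" for x
    by (simp add: Int_commute openin_open_Int)
  then have "open_cover X B"
    unfolding open_cover_def B_def using S by auto
  moreover have "\<exists>U\<in>A. \<phi> ` b \<subseteq> U" if "b \<in> B" "\<phi> \<in> \<Phi>" for b \<phi>
  proof -
    obtain x where x: "x \<in> X" "b = ball x \<delta> \<inter> X" using \<open>b \<in> B\<close> S(2) unfolding B_def by blast
    have "\<phi> x \<in> X" using into[OF \<open>\<phi> \<in> \<Phi>\<close>] x(1) by blast
    then obtain U where "U \<in> A" "ball (\<phi> x) \<epsilon> \<inter> X \<subseteq> U"
      using \<epsilon>(2) by blast
    moreover have "\<phi> y \<in> ball (\<phi> x) \<epsilon> \<inter> X" if "y \<in> b" for y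
      using \<delta>(2) into[OF \<open>\<phi> \<in> \<Phi>\<close>] \<open>\<phi> \<in> \<Phi>\<close> x that by (auto simp: dist_commute)
    ultimately show ?thesis by blast
  qed
  ultimately show ?thesis by (rule that)
qed

definition refines :: "'a set set \<Rightarrow> 'a set set \<Rightarrow> bool" where
  "refines \<C> \<D> \<longleftrightarrow> (\<forall>C\<in>\<C>. \<exists>D\<in>\<D>. C \<subseteq> D)"

lemma cover_num_le_of_refines:
  assumes "finite \<C>" "X \<subseteq> \<Union>\<C>" "refines \<C> \<D>"
  shows "cover_num X \<D> \<le> cover_num X \<C>"
proof -
  let ?P = "\<lambda>\<E> k. \<exists>\<C>'. \<C>' \<subseteq> \<E> \<and> finite \<C>' \<and> card \<C>' = k \<and> X \<subseteq> \<Union>\<C>'"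
  have "?P \<C> (card \<C>)" using assms by blast
  then have "?P \<C> (cover_num X \<C>)" unfolding cover_num_def by (rule LeastI)
  then obtain \<C>' where \<C>': "\<C>' \<subseteq> \<C>" "finite \<C>'" "card \<C>' = cover_num X \<C>" "X \<subseteq> \<Union>\<C>'"
    by blast
  obtain \<rho> where \<rho>: "\<And>C. C \<in> \<C> \<Longrightarrow> \<rho> C \<in> \<D> \<and> C \<subseteq> \<rho> C"
    using assms(3) unfolding refines_def by metis
  have "?P \<D> (card (\<rho> ` \<C>'))"
    using \<C>' \<rho> by (intro exI[of _ "\<rho> ` \<C>'"]) blast
  then have "cover_num X \<D> \<le> card (\<rho> ` \<C>')" unfolding cover_num_def by (rule Least_le)
  also have "\<dots> \<le> cover_num X \<C>" using \<C>' card_image_le by metis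
  finally show ?thesis .
qed

lemma finite_join_pre:
  assumes "finite \<A>"
  shows "finite (join_pre X g a m \<A>)"
proof -
  let ?J = "\<lambda>c. X \<inter> (\<Inter>i\<in>{..<m}. {x. fcomp g 0 (a i) x \<in> c i})"
  have "join_pre X g a m \<A> \<subseteq> ?J ` ({..<m} \<rightarrow>\<^sub>E \<A>)"
  proof
    fix S assume "S \<in> join_pre X g a m \<A>"
    then obtain c where c: "\<forall>i<m. c i \<in> \<A>" "S = ?J c"
      unfolding join_pre_def by blast
    then have "restrict c {..<m} \<in> {..<m} \<rightarrow>\<^sub>E \<A>" "S = ?J (restrict c {..<m})" by auto
    then show "S \<in> ?J ` ({..<m} \<rightarrow>\<^sub>E \<A>)" by blast
  qed
  moreover have "finite ({..<m} \<rightarrow>\<^sub>E \<A>)" using assms by (simp add: finite_PiE)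
  ultimately show ?thesis by (meson finite_imageI finite_subset)
qed

lemma join_pre_covers:
  assumes "\<And>k. g k ` X \<subseteq> X" "\<Union>\<A> = X"
  shows "X \<subseteq> \<Union>(join_pre X g a m \<A>)"
proof
  fix x assume x: "x \<in> X"
  have "\<forall>i<m. \<exists>U\<in>\<A>. fcomp g 0 (a i) x \<in> U"
    using fcomp_image_subset[of g X, OF assms(1)] x assms(2) by blast
  then obtain c where c: "\<forall>i<m. c i \<in> \<A> \<and> fcomp g 0 (a i) x \<in> c i" by metis
  then have "X \<inter> (\<Inter>i\<in>{..<m}. {x. fcomp g 0 (a i) x \<in> c i}) \<in> join_pre X g a m \<A>"
    unfolding join_pre_def by blast
  with x c show "x \<in> \<Union>(join_pre X g a m \<A>)" by blast
qed

lemma join_pre_refines_of_factorization: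
  assumes p: "\<And>i. i < m \<Longrightarrow> p i < m"
    and factor: "\<And>i x. i < m \<Longrightarrow> x \<in> X \<Longrightarrow> fcomp f 0 (a i) x = \<phi> i (fcomp g 0 (b (p i)) x)"
    and maps: "\<And>i B. i < m \<Longrightarrow> B \<in> \<B> \<Longrightarrow> \<exists>U\<in>\<A>. \<phi> i ` B \<subseteq> U"
  shows "refines (join_pre X g b m \<B>) (join_pre X f a m \<A>)"
  unfolding refines_def
proof
  fix C assume "C \<in> join_pre X g b m \<B>"
  then obtain c where c: "\<forall>j<m. c j \<in> \<B>" "C = X \<inter> (\<Inter>j\<in>{..<m}. {x. fcomp g 0 (b j) x \<in> c j})"
    unfolding join_pre_def by blast
  have "\<forall>i<m. \<exists>U\<in>\<A>. \<phi> i ` c (p i) \<subseteq> U" using maps p c(1) by blast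
  then obtain u where u: "\<And>i. i < m \<Longrightarrow> u i \<in> \<A> \<and> \<phi> i ` c (p i) \<subseteq> u i" by metis
  let ?D = "X \<inter> (\<Inter>i\<in>{..<m}. {x. fcomp f 0 (a i) x \<in> u i})"
  have D: "?D \<in> join_pre X f a m \<A>" unfolding join_pre_def using u by blast
  have "C \<subseteq> ?D"
  proof
    fix x assume "x \<in> C"
    then have x: "x \<in> X" "\<And>i. i < m \<Longrightarrow> fcomp g 0 (b (p i)) x \<in> c (p i)" using c(2) p by auto
    have "fcomp f 0 (a i) x \<in> u i" if "i < m" for i
      using factor[OF that x(1)] u[OF that] x(2)[OF that] by auto
    with x(1) show "x \<in> ?D" by blast
  qed
  then show "\<exists>D\<in>join_pre X f a m \<A>. C \<subseteq> D" using D by (rule bexI)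
qed

lemma cover_num_le_join_pre_of_refines:
  assumes "open_cover X \<B>" "\<And>k. g k ` X \<subseteq> X" "refines (join_pre X g b m \<B>) \<D>"
  shows "cover_num X \<D> \<le> cover_num X (join_pre X g b m \<B>)"
proof -
  have "finite \<B>" "\<Union>\<B> = X" using assms(1) unfolding open_cover_def by auto
  then show ?thesis
    by (intro cover_num_le_of_refines[OF finite_join_pre join_pre_covers[OF assms(2)] assms(3)])
qed

lemma le_enumerate_range_mono:
  fixes q :: "nat \<Rightarrow> nat"
  assumes mono: "mono q" and inf: "infinite (range q)"
  shows "q i \<le> enumerate (range q) i"
proof (induction i)
  case 0
  obtain t where "enumerate (range q) 0 = q t" using enumerate_in_set[OF inf] by blast
  with mono show ?case by (simp add: monoD)
next
  case (Suc i)
  obtain t where t: "enumerate (range q) (Suc i) = q t" using enumerate_in_set[OF inf] by blast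
  have "q i < q t" using Suc enumerate_step[OF inf, of i] t by simp
  then have "Suc i \<le> t" using mono by (metis monoD not_less_eq_eq order.strict_iff_not)
  with mono t show ?case by (simp add: monoD)
qed

lemma mono_reindex_strict_mono:
  fixes q :: "nat \<Rightarrow> nat"
  assumes "mono q" and inf: "infinite (range q)"
  obtains Q p where "strict_mono Q" "\<And>i. p i \<le> i" "\<And>i. Q (p i) = q i"
proof -
  let ?Q = "enumerate (range q)"
  have "\<exists>j. ?Q j = q i" for i using enumerate_Ex[OF inf] by blast
  then obtain p where Qp: "\<And>i. ?Q (p i) = q i" by metis
  have Q: "strict_mono ?Q" by (rule strict_mono_enumerate[OF inf])
  have p_le: "p i \<le> i" for i
  proof -
    have "?Q (p i) \<le> ?Q i" using le_enumerate_range_mono[OF assms, of i] Qp[of i] by simp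
    then show ?thesis using strict_mono_less_eq[OF Q] by blast
  qed
  from Q p_le Qp show ?thesis by (rule that)
qed

lemma strict_mono_div_reindex:
  fixes a :: "nat \<Rightarrow> nat"
  assumes a: "strict_mono a" and n: "n \<ge> 1"
  obtains Q p where "strict_mono Q" "\<And>i. p i \<le> i" "\<And>i. Q (p i) = a i div n"
proof (rule mono_reindex_strict_mono)
  show "mono (\<lambda>i. a i div n)" unfolding mono_def using a by (simp add: div_le_mono strict_mono_less_eq)
  show "infinite (range (\<lambda>i. a i div n))"
    unfolding infinite_nat_iff_unbounded_le
  proof
    fix M
    have "M \<le> a (M * n) div n" using seq_suble[OF a, of "M * n"] n
      by (metis div_le_mono nonzero_mult_div_cancel_right not_one_le_zero)
    then show "\<exists>v\<ge>M. v \<in> range (\<lambda>i. a i div n)" by blast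
  qed
qed (rule that)

lemma seq_entropy_along_nth_system:
  "seq_entropy_along X (nth_system f n) a = seq_entropy_along X f (\<lambda>i. a i * n)"
proof -
  have "join_pre X (nth_system f n) a m \<A> = join_pre X f (\<lambda>i. a i * n) m \<A>" for m \<A>
    unfolding join_pre_def fcomp_nth_system ..
  then show ?thesis unfolding seq_entropy_along_def by (simp only:)
qed

lemma seq_entropy_nth_system_le:
  assumes "n \<ge> 1"
  shows "seq_entropy X (nth_system f n) \<le> seq_entropy X f"
  unfolding seq_entropy_def
proof (rule SUP_least)
  fix a :: "nat \<Rightarrow> nat" assume "a \<in> {a. strict_mono a}"
  then have "strict_mono (\<lambda>i. a i * n)" using assms by (auto simp: strict_mono_def)
  then show "seq_entropy_along X (nth_system f n) a \<le> (SUP a \<in> {a. strict_mono a}. seq_entropy_along X f a)"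
    unfolding seq_entropy_along_nth_system by (intro SUP_upper) auto
qed

lemma limsup_join_pre_le_seq_entropy_along:
  assumes "open_cover X \<B>"
    and "\<And>m. cover_num X (join_pre X f a m \<A>) \<le> cover_num X (join_pre X g b m \<B>)"
  shows "limsup (\<lambda>m. ereal (ln (real (cover_num X (join_pre X f a m \<A>))) / real m))
           \<le> seq_entropy_along X g b"
proof -
  have ln_mono: "ln (real k) \<le> ln (real l)" if "k \<le> l" for k l :: nat
    using that by (cases "k = 0"; cases "l = 0") auto
  have "ln (real (cover_num X (join_pre X f a m \<A>))) \<le> ln (real (cover_num X (join_pre X g b m \<B>)))" for m
    using assms(2) by (rule ln_mono)
  then have "limsup (\<lambda>m. ereal (ln (real (cover_num X (join_pre X f a m \<A>))) / real m))
      \<le> limsup (\<lambda>m. ereal (ln (real (cover_num X (join_pre X g b m \<B>))) / real m))"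
    by (intro Limsup_mono always_eventually allI) (simp add: divide_right_mono)
  also have "\<dots> \<le> seq_entropy_along X g b"
    unfolding seq_entropy_along_def using assms(1) by (intro SUP_upper) auto
  finally show ?thesis .
qed

lemma limsup_join_pre_le_seq_entropy_nth_system:
  fixes X :: "'a::metric_space set"
  assumes "compact X" and into: "\<And>k. f k ` X \<subseteq> X" and equi: "equicontinuous_seq X f"
    and n: "n \<ge> 1" and a: "strict_mono a" and A: "open_cover X \<A>"
  shows "limsup (\<lambda>m. ereal (ln (real (cover_num X (join_pre X f a m \<A>))) / real m))
           \<le> seq_entropy X (nth_system f n)"
proof -
  let ?\<Phi> = "{fcomp f j r | j r. r < n}"
  have into_\<Phi>: "\<And>\<phi>. \<phi> \<in> ?\<Phi> \<Longrightarrow> \<phi> ` X \<subseteq> X" using fcomp_image_subset[of f X, OF into] by blast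
  obtain \<B> where \<B>: "open_cover X \<B>" and maps: "\<And>B \<phi>. B \<in> \<B> \<Longrightarrow> \<phi> \<in> ?\<Phi> \<Longrightarrow> \<exists>U\<in>\<A>. \<phi> ` B \<subseteq> U"
    using open_cover_refinement_equicontinuous[OF \<open>compact X\<close> A
        equicontinuous_family_fcomp_bounded[OF into equi] into_\<Phi>] by blast
  define q where "q i = a i div n" for i
  obtain Q p where Q: "strict_mono Q" and p: "\<And>i. p i \<le> i" "\<And>i. Q (p i) = q i"
    using strict_mono_div_reindex[OF a n] unfolding q_def by blast
  have factor: "fcomp f 0 (a i) x = fcomp f (q i * n) (a i mod n) (fcomp (nth_system f n) 0 (Q (p i)) x)"
    for i x
  proof -
    have "fcomp f 0 (a i) = fcomp f 0 (q i * n + a i mod n)" unfolding q_def by simp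
    then show ?thesis unfolding p(2) fcomp_nth_system fcomp_add by simp
  qed
  have "cover_num X (join_pre X f a m \<A>) \<le> cover_num X (join_pre X (nth_system f n) Q m \<B>)" for m
  proof (rule cover_num_le_join_pre_of_refines[OF \<B> nth_system_image_subset[of f X, OF into]])
    show "refines (join_pre X (nth_system f n) Q m \<B>) (join_pre X f a m \<A>)"
    proof (rule join_pre_refines_of_factorization[where \<phi> = "\<lambda>i. fcomp f (q i * n) (a i mod n)"])
      show "p i < m" if "i < m" for i using p(1)[of i] that by linarith
      show "fcomp f 0 (a i) x = fcomp f (q i * n) (a i mod n) (fcomp (nth_system f n) 0 (Q (p i)) x)" for i x
        by (rule factor)
      have "a i mod n < n" for i using n by simp
      then have "fcomp f (q i * n) (a i mod n) \<in> ?\<Phi>" for i by blast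
      then show "\<exists>U\<in>\<A>. fcomp f (q i * n) (a i mod n) ` B \<subseteq> U" if "B \<in> \<B>" for i B
        using maps[OF that] by blast
    qed
  qed
  then have "limsup (\<lambda>m. ereal (ln (real (cover_num X (join_pre X f a m \<A>))) / real m))
      \<le> seq_entropy_along X (nth_system f n) Q"
    by (rule limsup_join_pre_le_seq_entropy_along[OF \<B>])
  also have "\<dots> \<le> seq_entropy X (nth_system f n)"
    unfolding seq_entropy_def using Q by (intro SUP_upper) auto
  finally show ?thesis .
qed

theorem theorem4p4:
  fixes X :: "'a::metric_space set" and f :: "nat \<Rightarrow> 'a \<Rightarrow> 'a" and n :: nat
  assumes "compact X"
    and "\<And>k. continuous_on X (f k)"
    and "\<And>k. f k ` X \<subseteq> X"
    and "equicontinuous_seq X f"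
    and "n \<ge> 1"
  shows "seq_entropy X (nth_system f n) = seq_entropy X f"
proof (rule antisym)
  show "seq_entropy X (nth_system f n) \<le> seq_entropy X f"
    using \<open>n \<ge> 1\<close> by (rule seq_entropy_nth_system_le)
  show "seq_entropy X f \<le> seq_entropy X (nth_system f n)"
    unfolding seq_entropy_def[of X f] seq_entropy_along_def
    using limsup_join_pre_le_seq_entropy_nth_system[OF assms(1,3,4,5)] by (intro SUP_least) auto
qed

end
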